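(* Let $G$ be a vigorous subgroup of $\operatorname{Homeo}(\mathfrak{C})$. Let $A\in K_{\mathfrak{C}}$ and let $C,D$ be clopen subsets of $\mathfrak{C}$ such that $A$, $C$, $D$ are pairwise disjoint and $A\cup C\cup D\neq\mathfrak{C}$. Then $$\operatorname{pstab}_G(A)=\langle \operatorname{pstab}_G(A\cup C)\cup \operatorname{pstab}_G(A\cup D)\rangle.$$
   Context: $\mathfrak{C}$ denotes a Cantor space (a space homeomorphic to $\{0,1\}^\omega$). Groups of homeomorphisms act on the right. $K_{\mathfrak{C}}$ denotes the set of non-empty proper clopen subsets of $\mathfrak{C}$. For $\gamma\in\operatorname{Homeo}(\mathfrak{C})$, $\operatorname{supp}(\gamma)=\{p\in\mathfrak{C}: p\gamma\neq p\}$. For $G\le\operatorname{Homeo}(\mathfrak{C})$ and $A\subseteq\mathfrak{C}$, $\operatorname{pstab}_G(A)=\{g\in G: pg=p \text{ for all } p\in A\}$. A subset $S\subseteq \operatorname{Homeo}(\mathfrak{C})$ is vigorous if for all clopen $A,B,C\subseteq\mathfrak{C}$ with $B,C$ non-empty proper subsets of $A$ there is $\gamma\in S$ with $\operatorname{supp}(\gamma)\subseteq A$ and $B\gamma\subseteq C$. *)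

theory Defs
  imports "HOL-Analysis.Analysis"
begin

definition cantor_top :: "(nat \<Rightarrow> bool) topology" where
  "cantor_top = product_topology (\<lambda>_. discrete_topology (UNIV :: bool set)) UNIV"

definition is_cantor_space :: "'a::topological_space itself \<Rightarrow> bool" where
  "is_cantor_space _ \<longleftrightarrow> (euclidean :: 'a topology) homeomorphic_space cantor_top"

definition Homeo :: "('a::topological_space \<Rightarrow> 'a) set" where
  "Homeo = {f. homeomorphic_map euclidean euclidean f}"

definition clopen_set :: "'a::topological_space set \<Rightarrow> bool" where
  "clopen_set A \<longleftrightarrow> open A \<and> closed A"

definition K_sets :: "'a::topological_space set set" where
  "K_sets = {A. clopen_set A \<and> A \<noteq> {} \<and> A \<noteq> UNIV}"

definition supp :: "('a \<Rightarrow> 'a) \<Rightarrow> 'a set" where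
  "supp g = {p. g p \<noteq> p}"

definition pstab :: "('a \<Rightarrow> 'a) set \<Rightarrow> 'a set \<Rightarrow> ('a \<Rightarrow> 'a) set" where
  "pstab G A = {g \<in> G. \<forall>p\<in>A. g p = p}"

definition vigorous :: "('a::topological_space \<Rightarrow> 'a) set \<Rightarrow> bool" where
  "vigorous S \<longleftrightarrow> (\<forall>A B C. clopen_set A \<and> clopen_set B \<and> clopen_set C \<and>
      B \<noteq> {} \<and> B \<subset> A \<and> C \<noteq> {} \<and> C \<subset> A \<longrightarrow>
      (\<exists>\<gamma>\<in>S. supp \<gamma> \<subseteq> A \<and> \<gamma> ` B \<subseteq> C))"

definition homeo_subgroup :: "('a::topological_space \<Rightarrow> 'a) set \<Rightarrow> bool" where
  "homeo_subgroup G \<longleftrightarrow> G \<subseteq> Homeo \<and> id \<in> G \<and>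
     (\<forall>f\<in>G. \<forall>g\<in>G. f \<circ> g \<in> G) \<and> (\<forall>f\<in>G. inv f \<in> G)"

inductive_set gen_subgroup :: "('a \<Rightarrow> 'a) set \<Rightarrow> ('a \<Rightarrow> 'a) set" for S where
  gen_id: "id \<in> gen_subgroup S"
| gen_elem: "s \<in> S \<Longrightarrow> s \<in> gen_subgroup S"
| gen_inv: "s \<in> S \<Longrightarrow> inv s \<in> gen_subgroup S"
| gen_comp: "f \<in> gen_subgroup S \<Longrightarrow> g \<in> gen_subgroup S \<Longrightarrow> f \<circ> g \<in> gen_subgroup S"

end

theory Submission
  imports Defs
begin

text \<open>Every g fixing A pointwise is a product of two elements supported in clopen sets S
disjoint from A with \<open>A \<union> S \<noteq> UNIV\<close>. To see this, take a clopen \<open>T \<subseteq> - A\<close> avoiding a point q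
and its image \<open>g q\<close>, and (by vigour) some v supported in \<open>A \<union> T\<close> that shrinks T into a proper
clopen subset \<open>T'\<close>. Then \<open>g' = v g v\<inverse>\<close> is supported in \<open>- A - (T - T')\<close>, and
\<open>g'\<inverse> g = v g\<inverse> v\<inverse> g\<close> fixes A and is supported in \<open>T \<union> g\<inverse>(T)\<close>, which misses q.

An element y supported in such an S, with a point \<open>r \<notin> A \<union> C \<union> S\<close>, is handled by
conjugation: vigour gives \<open>\<gamma>\<close> supported in \<open>- (A \<union> C)\<close> that moves \<open>S - (A \<union> C)\<close> into
\<open>- (A \<union> C \<union> D)\<close>. Then \<open>\<gamma> \<in> pstab G (A \<union> C)\<close>, and \<open>\<gamma> y \<gamma>\<inverse>\<close> is supported in
\<open>C \<union> - (A \<union> C \<union> D)\<close>, so it lies in \<open>pstab G (A \<union> D)\<close>.\<close>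

definition cylinder :: "nat set \<Rightarrow> (nat \<Rightarrow> bool) \<Rightarrow> (nat \<Rightarrow> bool) set" where
  "cylinder J x = {y. \<forall>i\<in>J. y i = x i}"

lemma topspace_cantor_top [simp]: "topspace cantor_top = UNIV"
  by (simp add: cantor_top_def PiE_UNIV_domain)

lemma openin_cylinder:
  assumes "finite J" shows "openin cantor_top (cylinder J x)"
proof -
  have "cylinder J x = (\<Pi>\<^sub>E i\<in>UNIV. if i \<in> J then {x i} else UNIV)"
    by (auto simp: cylinder_def PiE_UNIV_domain split: if_splits)
  then show ?thesis
    unfolding cantor_top_def
    using assms by (auto intro!: product_topology_basis elim: finite_subset[rotated])
qed

lemma closedin_cylinder:
  assumes "finite J" shows "closedin cantor_top (cylinder J x)"
proof -
  have "- cylinder J x = (\<Union>i\<in>J. cylinder {i} (\<lambda>_. \<not> x i))"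
    by (auto simp: cylinder_def)
  then have "openin cantor_top (- cylinder J x)"
    using openin_cylinder by auto
  then show ?thesis
    by (simp add: closedin_def Compl_eq_Diff_UNIV)
qed

lemma infinite_cylinder:
  assumes "finite J" shows "infinite (cylinder J x)"
proof
  assume fin: "finite (cylinder J x)"
  obtain m where m: "\<forall>i\<in>J. i < m" using assms finite_nat_bounded by blast
  define flip where "flip k = x(m + k := \<not> x (m + k))" for k
  have "inj flip"
    by (rule injI) (metis add_left_cancel flip_def fun_upd_apply)
  moreover have "range flip \<subseteq> cylinder J x"
    using m by (auto simp: flip_def cylinder_def)
  ultimately show False
    using fin by (meson finite_imageD finite_subset infinite_UNIV_nat)
qed

lemma cylinder_subset_openin:
  assumes "openin cantor_top Q" "x \<in> Q"
  obtains J where "finite J" "cylinder J x \<subseteq> Q"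
proof -
  obtain X where X: "x \<in> (\<Pi>\<^sub>E i\<in>UNIV. X i)"
    "finite {i. X i \<noteq> topspace (discrete_topology (UNIV :: bool set))}"
    "(\<Pi>\<^sub>E i\<in>UNIV. X i) \<subseteq> Q"
    using product_topology_open_contains_basis[OF assms[unfolded cantor_top_def]] by blast
  have "y \<in> (\<Pi>\<^sub>E i\<in>UNIV. X i)" if y: "y \<in> cylinder {i. X i \<noteq> UNIV} x" for y
  proof -
    have "y i \<in> X i" for i
    proof (cases "X i = UNIV")
      case False
      with y have "y i = x i" by (simp add: cylinder_def)
      with X(1) show ?thesis by (simp add: PiE_UNIV_domain Pi_iff)
    qed simp
    then show ?thesis by (simp add: PiE_UNIV_domain)
  qed
  then show ?thesis
    using X(2,3) that by (metis subsetI subset_trans topspace_discrete_topology)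
qed

lemma t1_space_cantor_top: "t1_space cantor_top"
  unfolding cantor_top_def t1_space_product_topology
  by (simp add: t1_space_closedin_finite)

lemma cantor_space_t1:
  assumes "is_cantor_space TYPE('a::topological_space)"
  shows "t1_space (euclidean :: 'a topology)"
  using assms t1_space_cantor_top homeomorphic_t1_space by (auto simp: is_cantor_space_def)

lemma cantor_space_clopen_nbhd:
  fixes Q :: "'a::topological_space set"
  assumes "is_cantor_space TYPE('a)" "open Q" "x \<in> Q"
  obtains T where "clopen_set T" "infinite T" "x \<in> T" "T \<subseteq> Q"
proof -
  obtain h where h: "homeomorphic_map (euclidean :: 'a topology) cantor_top h"
    using assms(1) by (auto simp: is_cantor_space_def homeomorphic_space)
  then have cont: "continuous_map euclidean cantor_top h" and "bij h"
    using homeomorphic_imp_continuous_map homeomorphic_imp_injective_map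
      homeomorphic_imp_surjective_map by (fastforce simp: bij_def)+
  have "openin cantor_top (h ` Q)"
    using homeomorphic_map_openness[OF h] assms(2) by simp
  then obtain J where J: "finite J" "cylinder J (h x) \<subseteq> h ` Q"
    using assms(3) cylinder_subset_openin by blast
  define T where "T = h -` cylinder J (h x)"
  have "clopen_set T"
    unfolding T_def clopen_set_def
    using openin_continuous_map_preimage[OF cont openin_cylinder[OF J(1)]]
      closedin_continuous_map_preimage[OF cont closedin_cylinder[OF J(1)]] by (simp add: vimage_def)
  moreover have "h ` T = cylinder J (h x)"
    using \<open>bij h\<close> by (simp add: T_def bij_is_surj surj_image_vimage_eq)
  then have "infinite T"
    using infinite_cylinder[OF J(1)] finite_imageI by metis
  moreover have "T \<subseteq> Q"
    using J(2) \<open>bij h\<close> by (auto simp: T_def bij_def) (metis inj_image_mem_iff subsetD)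
  ultimately show ?thesis
    using that by (auto simp: T_def cylinder_def)
qed

lemma cantor_space_clopen_avoiding:
  fixes Q :: "'a::topological_space set"
  assumes "is_cantor_space TYPE('a)" "open Q" "Q \<noteq> {}" "finite F"
  obtains T where "clopen_set T" "T \<noteq> {}" "T \<subseteq> Q" "T \<inter> F = {}"
proof -
  obtain x where "x \<in> Q" using assms(3) by blast
  then obtain T0 where "infinite T0" "T0 \<subseteq> Q"
    using cantor_space_clopen_nbhd[OF assms(1,2)] by metis
  then have "infinite (Q - F)"
    using assms(4) by (meson Diff_infinite_finite infinite_super)
  then obtain y where y: "y \<in> Q - F"
    by (metis ex_in_conv finite.emptyI)
  have "closed F"
    using cantor_space_t1[OF assms(1)] assms(4) by (simp add: t1_space_closedin_finite)
  then have "open (Q - F)"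
    using assms(2) by (simp add: open_Diff)
  then obtain T where "clopen_set T" "y \<in> T" "T \<subseteq> Q - F"
    using cantor_space_clopen_nbhd[OF assms(1)] y by metis
  then show ?thesis
    using that by blast
qed

lemma supp_comp:
  "supp (f \<circ> g) \<subseteq> supp f \<union> supp g"
  by (auto simp: supp_def)

lemma supp_inv: "bij f \<Longrightarrow> supp (inv f) = supp f"
  unfolding supp_def by (metis bij_inv_eq_iff)

lemma supp_conj:
  assumes "bij \<gamma>" shows "supp (\<gamma> \<circ> y \<circ> inv \<gamma>) = \<gamma> ` supp y"
proof -
  have "supp (\<gamma> \<circ> y \<circ> inv \<gamma>) = inv \<gamma> -` supp y"
    by (auto simp: supp_def bij_inv_eq_iff[OF assms])
  then show ?thesis
    using bij_vimage_eq_inv_image[OF bij_imp_bij_inv[OF assms]] by (simp add: inv_inv_eq assms)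
qed

lemma image_disjoint_supp: "X \<inter> supp f = {} \<Longrightarrow> f ` X = X"
  by (force simp: supp_def image_iff)

lemma pstab_iff_supp: "g \<in> pstab G A \<longleftrightarrow> g \<in> G \<and> supp g \<inter> A = {}"
  by (auto simp: pstab_def supp_def)

lemma clopen_vimage_Homeo:
  assumes "g \<in> Homeo" "clopen_set T" shows "clopen_set (g -` T)"
proof -
  have "continuous_on UNIV g"
    using assms(1) homeomorphic_imp_continuous_map unfolding Homeo_def by fastforce
  then show ?thesis
    using assms(2) open_vimage closed_vimage by (auto simp: clopen_set_def)
qed

lemma bij_Homeo: "g \<in> Homeo \<Longrightarrow> bij g"
  unfolding Homeo_def bij_def
  using homeomorphic_imp_injective_map homeomorphic_imp_surjective_map by fastforce

lemma homeo_subgroup_bij: "homeo_subgroup G \<Longrightarrow> g \<in> G \<Longrightarrow> bij g"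
  unfolding homeo_subgroup_def using bij_Homeo by blast

lemma homeo_subgroup_pstab:
  assumes "homeo_subgroup G" shows "homeo_subgroup (pstab G A)"
  unfolding homeo_subgroup_def
proof (intro conjI ballI)
  show "pstab G A \<subseteq> Homeo" "id \<in> pstab G A"
    using assms by (auto simp: homeo_subgroup_def pstab_def)
next
  fix f g assume "f \<in> pstab G A" "g \<in> pstab G A"
  then show "f \<circ> g \<in> pstab G A"
    using assms by (auto simp: homeo_subgroup_def pstab_def)
next
  fix f assume f: "f \<in> pstab G A"
  then have "bij f"
    using assms homeo_subgroup_bij by (auto simp: pstab_def)
  with f show "inv f \<in> pstab G A"
    using assms by (simp add: pstab_iff_supp supp_inv homeo_subgroup_def)
qed

lemma gen_subgroup_least:
  assumes "homeo_subgroup H" "S \<subseteq> H" shows "gen_subgroup S \<subseteq> H"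
proof
  show "f \<in> H" if "f \<in> gen_subgroup S" for f
    using that assms by induction (auto simp: homeo_subgroup_def)
qed

lemma gen_subgroup_conj_cancel:
  assumes "\<gamma> \<in> S" "bij \<gamma>" "\<gamma> \<circ> y \<circ> inv \<gamma> \<in> gen_subgroup S"
  shows "y \<in> gen_subgroup S"
proof -
  have "y = inv \<gamma> \<circ> (\<gamma> \<circ> y \<circ> inv \<gamma>) \<circ> \<gamma>"
    using assms(2) by (simp add: fun_eq_iff bij_is_inj bij_is_surj surj_f_inv_f inv_f_f)
  then show ?thesis
    using assms by (metis gen_comp gen_elem gen_inv)
qed

definition small_supp :: "'a::topological_space set \<Rightarrow> ('a \<Rightarrow> 'a) \<Rightarrow> bool" where
  "small_supp A y \<longleftrightarrow> (\<exists>S. clopen_set S \<and> S \<inter> A = {} \<and> A \<union> S \<noteq> UNIV \<and> supp y \<subseteq> S)"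

lemma supported_off_AC_in_gen_subgroup:
  assumes G: "homeo_subgroup G" "vigorous G"
    and clopen: "clopen_set A" "clopen_set C" "clopen_set D"
    and disj: "A \<inter> C = {}" "A \<inter> D = {}" "C \<inter> D = {}"
    and "D \<noteq> {}" "A \<union> C \<union> D \<noteq> UNIV"
    and y: "y \<in> G" "clopen_set S" "S \<inter> A = {}" "supp y \<subseteq> S" "r \<notin> A \<union> C \<union> S"
  shows "y \<in> gen_subgroup (pstab G (A \<union> C) \<union> pstab G (A \<union> D))"
proof (cases "S \<inter> - (A \<union> C) = {}")
  case True
  then have "y \<in> pstab G (A \<union> D)"
    using y disj by (auto simp: pstab_iff_supp)
  then show ?thesis by (blast intro: gen_elem)
next
  case False
  define W where "W = - (A \<union> C)"
  define E where "E = - (A \<union> C \<union> D)"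
  have "clopen_set W" "clopen_set (S \<inter> W)" "clopen_set E"
    using clopen y(2) by (auto simp: clopen_set_def W_def E_def)
  moreover have "S \<inter> W \<subset> W" "E \<subset> W" "E \<noteq> {}"
    using y(5) assms(9,10) disj by (auto simp: W_def E_def)
  ultimately obtain \<gamma> where \<gamma>: "\<gamma> \<in> G" "supp \<gamma> \<subseteq> W" "\<gamma> ` (S \<inter> W) \<subseteq> E"
    using G(2)[unfolded vigorous_def, rule_format, of W "S \<inter> W" E] False W_def by blast
  have "bij \<gamma>" using homeo_subgroup_bij[OF G(1) \<gamma>(1)] .
  have \<gamma>_stab: "\<gamma> \<in> pstab G (A \<union> C)"
    using \<gamma>(1,2) by (auto simp: pstab_iff_supp W_def)
  have "\<gamma> ` S \<subseteq> \<gamma> ` (S \<inter> W) \<union> \<gamma> ` (S - W)"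
    by blast
  also have "\<dots> \<subseteq> E \<union> (S - W)"
    using \<gamma>(2,3) image_disjoint_supp[of "S - W" \<gamma>] by blast
  also have "\<dots> \<subseteq> E \<union> C"
    using y(3) by (auto simp: W_def)
  finally have "supp (\<gamma> \<circ> y \<circ> inv \<gamma>) \<subseteq> E \<union> C"
    using supp_conj[OF \<open>bij \<gamma>\<close>, of y] y(4) by blast
  then have "supp (\<gamma> \<circ> y \<circ> inv \<gamma>) \<inter> (A \<union> D) = {}"
    using disj by (auto simp: E_def)
  moreover have "\<gamma> \<circ> y \<circ> inv \<gamma> \<in> G"
    using G(1) \<gamma>(1) y(1) by (simp add: homeo_subgroup_def)
  ultimately have "\<gamma> \<circ> y \<circ> inv \<gamma> \<in> pstab G (A \<union> D)"
    by (simp add: pstab_iff_supp)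
  then show ?thesis
    using \<gamma>_stab \<open>bij \<gamma>\<close> by (blast intro: gen_subgroup_conj_cancel gen_elem)
qed

lemma small_supp_in_gen_subgroup:
  assumes G: "homeo_subgroup G" "vigorous G"
    and clopen: "clopen_set A" "clopen_set C" "clopen_set D"
    and disj: "A \<inter> C = {}" "A \<inter> D = {}" "C \<inter> D = {}"
    and "C \<noteq> {}" "D \<noteq> {}" "A \<union> C \<union> D \<noteq> UNIV"
    and y: "y \<in> G" "small_supp A y"
  shows "y \<in> gen_subgroup (pstab G (A \<union> C) \<union> pstab G (A \<union> D))"
proof -
  obtain S r where S: "clopen_set S" "S \<inter> A = {}" "supp y \<subseteq> S" "r \<notin> A \<union> S"
    using y(2) by (auto simp: small_supp_def)
  show ?thesis
  proof (cases "r \<in> C")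
    case True
    have "y \<in> gen_subgroup (pstab G (A \<union> D) \<union> pstab G (A \<union> C))"
    proof (rule supported_off_AC_in_gen_subgroup[OF G clopen(1,3,2) disj(2,1)])
      show "D \<inter> C = {}" "A \<union> D \<union> C \<noteq> UNIV" "r \<notin> A \<union> D \<union> S"
        using assms(8,11) S(4) True by auto
    qed (use assms S in auto)
    then show ?thesis by (simp add: Un_commute)
  next
    case False
    show ?thesis
      by (rule supported_off_AC_in_gen_subgroup[OF G clopen disj]) (use assms S False in auto)
  qed
qed

lemma small_supp_conj:
  assumes "bij v" "supp g \<inter> A = {}" "supp v \<subseteq> A \<union> T" "v ` T \<subseteq> T'" "T' \<subseteq> T"
    and "T \<inter> A = {}" "clopen_set A" "clopen_set T" "clopen_set T'" "t \<in> T - T'"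
  shows "small_supp A (v \<circ> g \<circ> inv v)"
proof -
  have "v ` (- A) \<subseteq> v ` T \<union> v ` (- A - T)"
    by blast
  also have "\<dots> \<subseteq> - A - (T - T')"
    using assms(3-6) image_disjoint_supp[of "- A - T" v] by blast
  finally have "supp (v \<circ> g \<circ> inv v) \<subseteq> - A - (T - T')"
    using supp_conj[OF assms(1)] assms(2) by blast
  moreover have "clopen_set (- A - (T - T'))"
    using assms(7-9) by (auto simp: clopen_set_def)
  ultimately show ?thesis
    unfolding small_supp_def using assms(6,10) by (intro exI[of _ "- A - (T - T')"]) auto
qed

lemma small_supp_commutator:
  assumes "g \<in> Homeo" "bij v" "supp g \<inter> A = {}" "supp v \<subseteq> A \<union> T"
    and "supp (v \<circ> inv g \<circ> inv v \<circ> g) \<inter> A = {}"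
    and "T \<inter> A = {}" "clopen_set T" "q \<notin> A \<union> T" "g q \<notin> T"
  shows "small_supp A (v \<circ> inv g \<circ> inv v \<circ> g)"
proof -
  have "bij g" using assms(1) by (rule bij_Homeo)
  have "v \<circ> inv g \<circ> inv v \<circ> g = v \<circ> (inv g \<circ> inv v \<circ> inv (inv g))"
    using \<open>bij g\<close> by (simp add: inv_inv_eq comp_assoc)
  then have "supp (v \<circ> inv g \<circ> inv v \<circ> g) \<subseteq> supp v \<union> inv g ` supp v"
    using supp_comp supp_conj[OF bij_imp_bij_inv] supp_inv \<open>bij g\<close> \<open>bij v\<close> by metis
  also have "\<dots> \<subseteq> A \<union> T \<union> inv g ` A \<union> inv g ` T"
    using assms(4) by blast
  also have "\<dots> = A \<union> T \<union> g -` T"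
    using image_disjoint_supp[of A "inv g"] supp_inv[OF \<open>bij g\<close>] assms(3)
      bij_vimage_eq_inv_image[OF \<open>bij g\<close>] by auto
  finally have "supp (v \<circ> inv g \<circ> inv v \<circ> g) \<subseteq> T \<union> g -` T"
    using assms(5) by blast
  moreover have "clopen_set (T \<union> g -` T)"
    using clopen_vimage_Homeo[OF assms(1,7)] assms(7) by (auto simp: clopen_set_def)
  moreover have "g p = p" if "p \<in> A" for p
    using assms(3) that by (auto simp: supp_def)
  then have "(T \<union> g -` T) \<inter> A = {}"
    using assms(6) by auto
  ultimately show ?thesis
    unfolding small_supp_def using assms(8,9) by (intro exI[of _ "T \<union> g -` T"]) auto
qed

lemma pstab_decomp_small_supp:
  fixes A :: "'a::topological_space set"
  assumes cantor: "is_cantor_space TYPE('a)" and G: "homeo_subgroup G" "vigorous G"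
    and A: "clopen_set A" "A \<noteq> {}" "A \<noteq> UNIV" and g: "g \<in> pstab G A"
  obtains g' x where "g = g' \<circ> x" "g' \<in> G" "x \<in> G" "small_supp A g'" "small_supp A x"
proof -
  have gG: "g \<in> G" "supp g \<inter> A = {}"
    using g by (simp_all add: pstab_iff_supp)
  then have "bij g" "g \<in> Homeo"
    using G homeo_subgroup_bij by (auto simp: homeo_subgroup_def)
  obtain q where q: "q \<notin> A" using A(3) by blast
  have "open (- A)" "- A \<noteq> {}"
    using A(1) q by (auto simp: clopen_set_def)
  then obtain T where T: "clopen_set T" "T \<noteq> {}" "T \<subseteq> - A" "T \<inter> {q, g q} = {}"
    using cantor_space_clopen_avoiding[OF cantor, of "- A" "{q, g q}"] by blast
  then obtain t where t: "t \<in> T" by blast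
  obtain T' where T': "clopen_set T'" "T' \<noteq> {}" "T' \<subseteq> T" "T' \<inter> {t} = {}"
    using cantor_space_clopen_avoiding[OF cantor, of T "{t}"] T(1,2) by (auto simp: clopen_set_def)
  have "clopen_set (A \<union> T)" "T \<subset> A \<union> T" "T' \<subset> A \<union> T"
    using A T T' by (auto simp: clopen_set_def)
  then obtain v where v: "v \<in> G" "supp v \<subseteq> A \<union> T" "v ` T \<subseteq> T'"
    using G(2)[unfolded vigorous_def, rule_format, of "A \<union> T" T T'] T(1,2) T'(1,2) by blast
  have "bij v" using homeo_subgroup_bij[OF G(1) v(1)] .
  define g' where "g' = v \<circ> g \<circ> inv v"
  have g'G: "g' \<in> G"
    using G(1) v(1) gG(1) by (simp add: homeo_subgroup_def g'_def)
  have small_g': "small_supp A g'"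
    unfolding g'_def
    by (rule small_supp_conj[OF \<open>bij v\<close> gG(2) v(2,3) T'(3)]) (use A T T' t in auto)
  then have "g' \<in> pstab G A"
    using g'G by (auto simp: small_supp_def pstab_iff_supp)
  then have x_stab: "inv g' \<circ> g \<in> pstab G A"
    using homeo_subgroup_pstab[OF G(1)] g by (simp add: homeo_subgroup_def)
  have x_eq: "inv g' \<circ> g = v \<circ> inv g \<circ> inv v \<circ> g"
    using \<open>bij v\<close> \<open>bij g\<close>
    by (simp add: g'_def o_inv_distrib inv_inv_eq bij_imp_bij_inv bij_comp comp_assoc)
  have "small_supp A (inv g' \<circ> g)"
    unfolding x_eq
    by (rule small_supp_commutator[OF \<open>g \<in> Homeo\<close> \<open>bij v\<close> gG(2) v(2)])
      (use x_stab x_eq T q in \<open>auto simp: pstab_iff_supp\<close>)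
  moreover have "g = g' \<circ> (inv g' \<circ> g)"
    using homeo_subgroup_bij[OF G(1) g'G] by (simp add: fun_eq_iff bij_is_surj surj_f_inv_f)
  ultimately show ?thesis
    using that g'G small_g' x_stab by (simp add: pstab_def)
qed

theorem lemma2p9:
  fixes G :: "('a::topological_space \<Rightarrow> 'a) set"
    and A C D :: "'a set"
  assumes "is_cantor_space TYPE('a)"
    and "homeo_subgroup G"
    and "vigorous G"
    and "A \<in> K_sets"
    and "clopen_set C" and "clopen_set D"
    and "A \<inter> C = {}" and "A \<inter> D = {}" and "C \<inter> D = {}"
    and "A \<union> C \<union> D \<noteq> UNIV"
  shows "pstab G A = gen_subgroup (pstab G (A \<union> C) \<union> pstab G (A \<union> D))"
proof
  let ?H = "gen_subgroup (pstab G (A \<union> C) \<union> pstab G (A \<union> D))"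
  show "?H \<subseteq> pstab G A"
    by (rule gen_subgroup_least[OF homeo_subgroup_pstab[OF assms(2)]]) (auto simp: pstab_def)
  have A: "clopen_set A" "A \<noteq> {}" "A \<noteq> UNIV"
    using assms(4) by (auto simp: K_sets_def)
  show "pstab G A \<subseteq> ?H"
  proof
    fix g assume g: "g \<in> pstab G A"
    show "g \<in> ?H"
    proof (cases "C = {} \<or> D = {}")
      case True
      then show ?thesis using g by (auto intro: gen_elem)
    next
      case False
      obtain g' x where "g = g' \<circ> x" "g' \<in> G" "x \<in> G" "small_supp A g'" "small_supp A x"
        using pstab_decomp_small_supp[OF assms(1-3) A g] .
      then show ?thesis
        using small_supp_in_gen_subgroup[OF assms(2,3) A(1) assms(5-9)] False assms(10)
        by (metis gen_comp)
    qed
  qed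
qed

end
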